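(* Let $G$ be a finite nonabelian group having a nonnormal subgroup $S$ of index $[G:S]=3$. Then $\beta(G)\ge \frac{4}{3}|G|$.
   Context: For a nonempty subset $X$ of a group $G$, $Q(X):=\{xy^{-1}: x,y\in X\}$. Nonempty subsets $S_1,S_2,S_3$ of $G$ satisfy the Triple Product Property (TPP) if for all $s_i\in Q(S_i)$: $s_1s_2s_3=1$ iff $s_1=s_2=s_3=1$. A group $G$ realizes $\langle n,p,m\rangle$ if there are subsets $S_1,S_2,S_3\subseteq G$ with $|S_1|=n$, $|S_2|=p$, $|S_3|=m$ satisfying the TPP. For a nontrivial finite group $G$, the TPP capacity is $\beta(G):=\max\{npm : G \text{ realizes } \langle n,p,m\rangle\}$. *)

theory Defs
  imports "HOL-Algebra.Algebra"
begin

definition quot_set :: "('a, 'b) monoid_scheme \<Rightarrow> 'a set \<Rightarrow> 'a set" where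
  "quot_set G A = {monoid.mult G x (m_inv G y) | x y. x \<in> A \<and> y \<in> A}"

definition TPP :: "('a, 'b) monoid_scheme \<Rightarrow> 'a set \<Rightarrow> 'a set \<Rightarrow> 'a set \<Rightarrow> bool" where
  "TPP G S1 S2 S3 \<longleftrightarrow>
     (\<forall>s1 \<in> quot_set G S1. \<forall>s2 \<in> quot_set G S2. \<forall>s3 \<in> quot_set G S3.
        (monoid.mult G (monoid.mult G s1 s2) s3 = one G) \<longleftrightarrow>
        (s1 = one G \<and> s2 = one G \<and> s3 = one G))"

definition realizes :: "('a, 'b) monoid_scheme \<Rightarrow> nat \<Rightarrow> nat \<Rightarrow> nat \<Rightarrow> bool" where
  "realizes G n p m \<longleftrightarrow>
     (\<exists>S1 S2 S3. S1 \<subseteq> carrier G \<and> S2 \<subseteq> carrier G \<and> S3 \<subseteq> carrier G \<and>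
        S1 \<noteq> {} \<and> S2 \<noteq> {} \<and> S3 \<noteq> {} \<and>
        card S1 = n \<and> card S2 = p \<and> card S3 = m \<and> TPP G S1 S2 S3)"

definition tpp_capacity :: "('a, 'b) monoid_scheme \<Rightarrow> nat" where
  "tpp_capacity G = Max {n * p * m | n p m. realizes G n p m}"

end

theory Submission
  imports Defs
begin

text \<open>Let \<open>G\<close> act on the three right cosets of \<open>S\<close> by right multiplication. Since \<open>S\<close> is
not normal, some \<open>h \<in> S\<close> moves some coset \<open>S x\<close>; then \<open>h\<close> fixes \<open>S\<close> and swaps the other two
cosets. Hence \<open>b = x h x\<inverse>\<close> and \<open>c = h b h\<inverse>\<close> act as two distinct transpositions that
both move \<open>S\<close>, i.e. \<open>b, c \<notin> S\<close>, \<open>b\<^sup>2, c\<^sup>2 \<in> S\<close> and \<open>b c\<inverse> \<notin> S\<close>. These conditions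
ensure that no nontrivial product of an element of \<open>Q({1,b}) = {1,b,b\<inverse>}\<close> and one of
\<open>Q({1,c})\<close> lies in \<open>S = Q(S)\<close>, so \<open>S, {1,b}, {1,c}\<close> satisfy the TPP, giving
\<open>\<beta>(G) \<ge> 4|S| = 4|G|/3\<close>.\<close>

context group
begin

lemma inv_mult_cancel_left [simp]:
  "x \<in> carrier G \<Longrightarrow> y \<in> carrier G \<Longrightarrow> inv x \<otimes> (x \<otimes> y) = y"
  by (simp add: m_assoc[symmetric])

lemma mult_inv_cancel_left [simp]:
  "x \<in> carrier G \<Longrightarrow> y \<in> carrier G \<Longrightarrow> x \<otimes> (inv x \<otimes> y) = y"
  by (simp add: m_assoc[symmetric])

lemma subgroup_inv_mem_iff:
  assumes "subgroup S G" "z \<in> carrier G"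
  shows "inv z \<in> S \<longleftrightarrow> z \<in> S"
  using assms by (metis inv_inv subgroupE(3))

lemma subgroup_mult_left_mem_iff:
  assumes S: "subgroup S G" and s: "s \<in> S" and z: "z \<in> carrier G"
  shows "s \<otimes> z \<in> S \<longleftrightarrow> z \<in> S"
proof
  assume "s \<otimes> z \<in> S"
  then have "inv s \<otimes> (s \<otimes> z) \<in> S" using S s subgroupE(3,4) by blast
  then show "z \<in> S" using subgroup.mem_carrier[OF S s] z by (simp add: m_assoc[symmetric])
qed (rule subgroupE(4)[OF S s])

lemma subgroup_mult_right_mem_iff:
  assumes S: "subgroup S G" and s: "s \<in> S" and z: "z \<in> carrier G"
  shows "z \<otimes> s \<in> S \<longleftrightarrow> z \<in> S"
proof -
  have s_carrier: "s \<in> carrier G" using subgroup.mem_carrier[OF S s] .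
  have "z \<otimes> s \<in> S \<longleftrightarrow> inv s \<otimes> inv z \<in> S"
    using subgroup_inv_mem_iff[OF S, of "z \<otimes> s"] s_carrier z by (simp add: inv_mult_group)
  also have "\<dots> \<longleftrightarrow> inv z \<in> S"
    using subgroup_mult_left_mem_iff[OF S subgroupE(3)[OF S s]] z by simp
  finally show ?thesis using subgroup_inv_mem_iff[OF S z] by simp
qed

lemma subgroup_conj_mem_iff:
  assumes "subgroup S G" "s \<in> S" "z \<in> carrier G"
  shows "s \<otimes> z \<otimes> inv s \<in> S \<longleftrightarrow> z \<in> S"
  using assms subgroup_mult_left_mem_iff subgroup_mult_right_mem_iff subgroupE(3)
  by (simp add: subgroup.mem_carrier)

lemma index_three_trichotomy:
  assumes S: "subgroup S G" and index: "card (rcosets S) = 3"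
    and x: "x \<in> carrier G" "x \<notin> S" and y: "y \<in> carrier G" "y \<notin> S" and xy: "x \<notin> S #> y"
    and z: "z \<in> carrier G"
  shows "z \<in> S \<or> z \<in> S #> x \<or> z \<in> S #> y"
proof -
  have S_sub: "S \<subseteq> carrier G" using S subgroup.subset by blast
  have distinct: "S #> x \<noteq> S" "S #> y \<noteq> S" "S #> x \<noteq> S #> y"
    using x y xy coset_join1[OF _ _ S] rcos_self[OF _ S] by metis+
  have "{S, S #> x, S #> y} \<subseteq> rcosets S"
    using rcosetsI[OF S_sub] x y subgroup.subgroup_in_rcosets[OF S is_group] by blast
  moreover have "card {S, S #> x, S #> y} = card (rcosets S)"
    using distinct index by auto
  moreover have "finite (rcosets S)" using index card.infinite by fastforce
  ultimately have "rcosets S = {S, S #> x, S #> y}" by (metis card_subset_eq)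
  moreover have "S #> z \<in> rcosets S" using rcosetsI[OF S_sub z] .
  ultimately show ?thesis using rcos_self[OF z S] by auto
qed

lemma quot_set_subgroup:
  assumes "subgroup S G"
  shows "quot_set G S = S"
  unfolding quot_set_def
proof (intro equalityI subsetI)
  fix s assume "s \<in> S"
  then have "s = s \<otimes> inv \<one> \<and> s \<in> S \<and> \<one> \<in> S"
    using assms subgroup.mem_carrier subgroup.one_closed by fastforce
  then show "s \<in> {x \<otimes> inv y |x y. x \<in> S \<and> y \<in> S}" by blast
qed (use assms subgroupE(3,4) in blast)

lemma quot_set_pair:
  assumes "b \<in> carrier G"
  shows "quot_set G {\<one>, b} = {\<one>, b, inv b}"
  using assms unfolding quot_set_def by force

lemma TPP_subgroupI:
  assumes S: "subgroup S G" and T: "T \<subseteq> carrier G" and U: "U \<subseteq> carrier G"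
    and trivial: "\<And>y z. y \<in> quot_set G T \<Longrightarrow> z \<in> quot_set G U \<Longrightarrow> y \<otimes> z \<in> S \<Longrightarrow> y = \<one> \<and> z = \<one>"
  shows "TPP G S T U"
  unfolding TPP_def
proof (intro ballI iffI)
  fix s y z
  assume s: "s \<in> quot_set G S" and y: "y \<in> quot_set G T" and z: "z \<in> quot_set G U"
    and prod: "s \<otimes> y \<otimes> z = \<one>"
  have carrier: "s \<in> carrier G" "y \<in> carrier G" "z \<in> carrier G"
    using s y z T U subgroup.mem_carrier[OF S] unfolding quot_set_subgroup[OF S] quot_set_def
    by auto
  then have "y \<otimes> z = inv s"
    using prod inv_solve_left[of "y \<otimes> z" s \<one>] by (simp add: m_assoc)
  then have "y \<otimes> z \<in> S"
    using s S subgroupE(3) by (simp add: quot_set_subgroup)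
  then show "s = \<one> \<and> y = \<one> \<and> z = \<one>"
    using trivial[OF y z] prod carrier by simp
qed simp

lemma TPP_subgroup_involution_pair:
  assumes S: "subgroup S G" and b: "b \<in> carrier G" "b \<notin> S" "b \<otimes> b \<in> S"
    and c: "c \<in> carrier G" "c \<notin> S" "c \<otimes> c \<in> S" and bc: "b \<otimes> inv c \<notin> S"
  shows "TPP G S {\<one>, b} {\<one>, c}"
proof (rule TPP_subgroupI[OF S])
  have bb: "inv (b \<otimes> b) \<in> S" using S b(3) subgroupE(3) by blast
  have "b \<otimes> inv c \<otimes> (c \<otimes> c) = b \<otimes> c" "inv (b \<otimes> b) \<otimes> (b \<otimes> c) = inv b \<otimes> c"
    "inv (b \<otimes> b) \<otimes> (b \<otimes> inv c) = inv b \<otimes> inv c"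
    using b c by (simp_all add: m_assoc[symmetric] inv_mult_group) (simp_all add: m_assoc)
  then have products: "b \<otimes> c \<notin> S" "inv b \<otimes> c \<notin> S" "inv b \<otimes> inv c \<notin> S"
    using bc b(1) c(1) subgroup_mult_right_mem_iff[OF S c(3), of "b \<otimes> inv c"]
      subgroup_mult_left_mem_iff[OF S bb, of "b \<otimes> c"] subgroup_mult_left_mem_iff[OF S bb, of "b \<otimes> inv c"]
    by auto
  have inverses: "inv b \<notin> S" "inv c \<notin> S"
    using S b c subgroup_inv_mem_iff by blast+
  show "y = \<one> \<and> z = \<one>"
    if "y \<in> quot_set G {\<one>, b}" "z \<in> quot_set G {\<one>, c}" "y \<otimes> z \<in> S" for y z
  proof -
    have "y = \<one> \<or> y = b \<or> y = inv b" "z = \<one> \<or> z = c \<or> z = inv c"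
      using that(1,2) unfolding quot_set_pair[OF b(1)] quot_set_pair[OF c(1)] by blast+
    then show ?thesis
      using that(3) b(1,2) c(1,2) bc products inverses by (elim disjE) simp_all
  qed
qed (simp_all add: b c)

end

locale index_three_nonnormal = group +
  fixes S x h
  assumes subgroup: "subgroup S G" and index_three: "card (rcosets S) = 3"
    and x_carrier: "x \<in> carrier G" and h_mem: "h \<in> S" and conj_not_mem: "x \<otimes> h \<otimes> inv x \<notin> S"
begin

lemma h_carrier: "h \<in> carrier G"
  using subgroup.mem_carrier[OF subgroup h_mem] .

lemma cosets_distinct: "x \<notin> S" "x \<otimes> h \<notin> S" "x \<notin> S #> (x \<otimes> h)"
proof -
  show x_not_mem: "x \<notin> S"
    using conj_not_mem subgroupE(3,4)[OF subgroup] h_mem by blast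
  then show "x \<otimes> h \<notin> S"
    using subgroup_mult_right_mem_iff[OF subgroup h_mem x_carrier] by blast
  have "inv (x \<otimes> h \<otimes> inv x) = x \<otimes> inv (x \<otimes> h)"
    using x_carrier h_carrier by (simp add: inv_mult_group m_assoc)
  then have "x \<otimes> inv (x \<otimes> h) \<notin> S"
    using conj_not_mem subgroup_inv_mem_iff[OF subgroup, of "x \<otimes> h \<otimes> inv x"] x_carrier h_carrier
    by simp
  then show "x \<notin> S #> (x \<otimes> h)"
    using subgroup.rcos_module[OF subgroup is_group] x_carrier h_carrier by simp
qed

lemma coset_cases:
  assumes "z \<in> carrier G"
  shows "z \<in> S \<or> z \<in> S #> x \<or> z \<in> S #> (x \<otimes> h)"
  using index_three_trichotomy[OF subgroup index_three] cosets_distinct x_carrier h_carrier assms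
  by simp

lemma conj_square_mem: "x \<otimes> (h \<otimes> h) \<otimes> inv x \<in> S"
proof -
  have hh: "h \<otimes> h \<in> S" using subgroupE(4)[OF subgroup h_mem h_mem] .
  have "x \<otimes> (h \<otimes> h) \<notin> S"
    using subgroup_mult_right_mem_iff[OF subgroup hh x_carrier] cosets_distinct(1) by blast
  moreover have "x \<otimes> (h \<otimes> h) \<notin> S #> (x \<otimes> h)"
    using conj_not_mem subgroup.rcos_module[OF subgroup is_group] x_carrier h_carrier
    by (simp add: inv_mult_group m_assoc)
  moreover have "x \<otimes> (h \<otimes> h) \<in> carrier G" using x_carrier h_carrier by simp
  ultimately have "x \<otimes> (h \<otimes> h) \<in> S #> x"
    using coset_cases by blast
  then show ?thesis
    using subgroup.rcos_module[OF subgroup is_group] x_carrier h_carrier by simp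
qed

lemma conj_mem_iff:
  assumes y: "y \<in> carrier G"
  shows "y \<otimes> h \<otimes> inv y \<in> S \<longleftrightarrow> y \<in> S"
proof
  assume "y \<in> S"
  then show "y \<otimes> h \<otimes> inv y \<in> S"
    using subgroup_conj_mem_iff[OF subgroup _ h_carrier] h_mem by blast
next
  assume conj_mem: "y \<otimes> h \<otimes> inv y \<in> S"
  have "y \<otimes> h \<otimes> inv y = s \<otimes> (x \<otimes> h \<otimes> inv x) \<otimes> inv s"
    if "s \<in> S" "y = s \<otimes> x \<or> y = s \<otimes> (x \<otimes> h)" for s
    using that x_carrier h_carrier subgroup.mem_carrier[OF subgroup]
    by (auto simp: inv_mult_group m_assoc)
  then have "y \<notin> S #> x" "y \<notin> S #> (x \<otimes> h)"
    using conj_mem conj_not_mem subgroup_conj_mem_iff[OF subgroup] x_carrier h_carrier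
    unfolding r_coset_def by auto
  then show "y \<in> S" using coset_cases[OF y] by blast
qed

lemma realizes_card_two_two: "realizes G (card S) 2 2"
proof -
  define b where "b = x \<otimes> h \<otimes> inv x"
  define c where "c = h \<otimes> b \<otimes> inv h"
  have b_carrier: "b \<in> carrier G" and c_carrier: "c \<in> carrier G"
    using x_carrier h_carrier by (simp_all add: b_def c_def)
  have b_not_mem: "b \<notin> S" using conj_not_mem by (simp add: b_def)
  have c_not_mem: "c \<notin> S"
    using subgroup_conj_mem_iff[OF subgroup h_mem b_carrier] b_not_mem by (simp add: c_def)
  have "b \<otimes> b = x \<otimes> (h \<otimes> h) \<otimes> inv x"
    using x_carrier h_carrier by (simp add: b_def m_assoc)
  then have bb: "b \<otimes> b \<in> S" using conj_square_mem by simp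
  have "c \<otimes> c = h \<otimes> (b \<otimes> b) \<otimes> inv h"
    using b_carrier h_carrier by (simp add: c_def m_assoc)
  then have cc: "c \<otimes> c \<in> S"
    using subgroup_conj_mem_iff[OF subgroup h_mem] bb b_carrier by simp
  have "b \<otimes> inv c = b \<otimes> h \<otimes> inv b \<otimes> inv h"
    using b_carrier h_carrier by (simp add: c_def inv_mult_group m_assoc)
  then have bc: "b \<otimes> inv c \<notin> S"
    using subgroup_mult_right_mem_iff[OF subgroup subgroupE(3)[OF subgroup h_mem]]
      conj_mem_iff[OF b_carrier] b_not_mem b_carrier h_carrier by simp
  have "TPP G S {\<one>, b} {\<one>, c}"
    using TPP_subgroup_involution_pair[OF subgroup] b_carrier b_not_mem bb c_carrier c_not_mem cc bc
    by blast
  moreover have "b \<noteq> \<one>" "c \<noteq> \<one>"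
    using b_not_mem c_not_mem subgroup.one_closed[OF subgroup] by auto
  ultimately show ?thesis
    unfolding realizes_def
    using subgroup.subset[OF subgroup] subgroup.one_closed[OF subgroup] b_carrier c_carrier
    by (rule_tac x=S in exI, rule_tac x="{\<one>, b}" in exI, rule_tac x="{\<one>, c}" in exI) auto
qed

end

lemma realizes_le_tpp_capacity:
  assumes finite: "finite (carrier G)" and realizes: "realizes G n p m"
  shows "n * p * m \<le> tpp_capacity G"
proof -
  have bounded: "n' * p' * m' \<le> order G ^ 3" if "realizes G n' p' m'" for n' p' m'
  proof -
    from that obtain S1 S2 S3 where "S1 \<subseteq> carrier G" "S2 \<subseteq> carrier G" "S3 \<subseteq> carrier G"
      "card S1 = n'" "card S2 = p'" "card S3 = m'"
      unfolding realizes_def by blast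
    then have "n' \<le> order G" "p' \<le> order G" "m' \<le> order G"
      using card_mono[OF finite] unfolding order_def by auto
    then have "n' * p' * m' \<le> order G * order G * order G" by (intro mult_le_mono)
    then show ?thesis by (simp add: power3_eq_cube)
  qed
  have "{n' * p' * m' | n' p' m'. realizes G n' p' m'} \<subseteq> {..order G ^ 3}"
    using bounded by auto
  then have "finite {n' * p' * m' | n' p' m'. realizes G n' p' m'}"
    using finite_subset by blast
  then show ?thesis
    unfolding tpp_capacity_def by (rule Max_ge) (use realizes in blast)
qed

lemma (in group) tpp_capacity_ge_index_three_nonnormal:
  assumes finite: "finite (carrier G)" and S: "subgroup S G" and nonnormal: "\<not> S \<lhd> G"
    and index: "card (rcosets S) = 3"
  shows "4 * card S \<le> tpp_capacity G"
proof -
  obtain x h where "x \<in> carrier G" "h \<in> S" "x \<otimes> h \<otimes> inv x \<notin> S"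
    using nonnormal normal_inv_iff S by blast
  with S index interpret index_three_nonnormal G S x h
    by (intro index_three_nonnormal.intro is_group index_three_nonnormal_axioms.intro)
  show ?thesis
    using realizes_le_tpp_capacity[OF finite realizes_card_two_two] by simp
qed

theorem mainTheorem4:
  fixes G :: "('a, 'b) monoid_scheme"
  assumes "group G"
    and "finite (carrier G)"
    and "\<not> comm_group G"
    and "\<exists>S. subgroup S G \<and> \<not> (S \<lhd> G) \<and> card (rcosets\<^bsub>G\<^esub> S) = 3"
  shows "real (tpp_capacity G) \<ge> 4 / 3 * real (order G)"
proof -
  obtain S where S: "subgroup S G" and nonnormal: "\<not> S \<lhd> G"
    and index: "card (rcosets\<^bsub>G\<^esub> S) = 3"
    using assms(4) by blast
  have "4 * card S \<le> tpp_capacity G"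
    using group.tpp_capacity_ge_index_three_nonnormal[OF assms(1,2) S nonnormal index] .
  moreover have "order G = 3 * card S"
    using group.lagrange[OF assms(1) S] index by simp
  ultimately show ?thesis by simp
qed

end
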